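(* Let $d \geq 2$, $j \in [0,d-1]$ and $N \geq 0$. Write $q = \lfloor N/d \rfloor$, $\rho = \overline{(N)}_d$ and $c = \overline{(j - t_d(q))}_d$. Then $$\sum_{k=0}^{N} a_{j,d}(k) = \frac{dN(N+1)}{2} + \frac{q\,d(d-1)}{2} + c(\rho+1) - \frac{\rho(\rho+1)}{2} + d\max\{\rho - c, 0\}.$$
   Context: Let $d \geq 2$ be an integer. For an integer $x$, $\overline{(x)}_d$ denotes the unique integer in $[0,d-1]$ congruent to $x$ modulo $d$. For $n \geq 0$, $s_d(n)$ denotes the sum of the base-$d$ digits of $n$, and $t_d(n) = \overline{(s_d(n))}_d$. For $j \in [0,d-1]$, $(a_{j,d}(n))_{n\geq 0}$ is the strictly increasing enumeration (indexed from $n=0$) of all nonnegative integers $k$ with $s_d(k) \equiv j \pmod d$. *)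

theory Defs
  imports Complex_Main "HOL-Library.Infinite_Set"
begin

fun digit_sum :: "nat \<Rightarrow> nat \<Rightarrow> nat" where
  "digit_sum d n = (if d < 2 \<or> n = 0 then 0 else n mod d + digit_sum d (n div d))"

definition t_d :: "nat \<Rightarrow> nat \<Rightarrow> nat" where
  "t_d d n = digit_sum d n mod d"

definition a_seq :: "nat \<Rightarrow> nat \<Rightarrow> nat \<Rightarrow> nat" where
  "a_seq j d n = enumerate {k. digit_sum d k mod d = j mod d} n"

end

theory Submission
  imports Defs
begin

(*
  Write k = d*q + r with r < d.  Since s_d(d*q + r) = s_d(q) + r, the number d*q + r
  lies in the class j iff r is the "digit offset" c(q) = (j - t_d(q)) mod d.  So every
  block [d*q, d*q + d) contains exactly one member of the class, and a_{j,d}(k) =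
  d*k + c(k).  Moreover c(d*q + r) = (c(q) - r) mod d, so along a block the offsets
  run through c(q), c(q)-1, ..., wrapping around modulo d.
*)

(* The defining equation of digit_sum unfolds recursively; it is used only explicitly. *)
declare digit_sum.simps[simp del]

lemma digit_sum_block:
  assumes "d \<ge> 2" and "r < d"
  shows "digit_sum d (d * q + r) = digit_sum d q + r"
proof (cases "d * q + r = 0")
  case True
  then show ?thesis using assms by (simp add: digit_sum.simps)
next
  case False
  then show ?thesis using assms by (subst digit_sum.simps) auto
qed

(* The last digit r < d that puts d*q + r into the class j: (j - t_d(q)) mod d. *)
definition digit_offset :: "nat \<Rightarrow> nat \<Rightarrow> nat \<Rightarrow> nat" where
  "digit_offset j d q = nat ((int j - int (t_d d q)) mod int d)"

lemma digit_offset_less: "d \<ge> 2 \<Longrightarrow> digit_offset j d q < d"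
  unfolding digit_offset_def by (simp add: nat_less_iff)

lemma residue_iff:
  fixes a r j d :: int
  assumes "0 \<le> j" "j < d" "0 \<le> r" "r < d"
  shows "(a + r) mod d = j \<longleftrightarrow> r = (j - a) mod d"
proof -
  have "(a + r) mod d = j \<longleftrightarrow> (a + r) mod d = j mod d" using assms by simp
  also have "\<dots> \<longleftrightarrow> r mod d = (j - a) mod d"
    by (simp only: mod_eq_dvd_iff) (simp add: algebra_simps)
  also have "r mod d = r" using assms by simp
  finally show ?thesis .
qed

lemma last_digit_iff_offset:
  assumes "d \<ge> 2" "j < d" "r < d"
  shows "digit_sum d (d * q + r) mod d = j \<longleftrightarrow> r = digit_offset j d q"
proof -
  have "digit_sum d (d * q + r) mod d = j \<longleftrightarrow> (int (digit_sum d q) + int r) mod int d = int j"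
    using assms by (simp add: digit_sum_block flip: zmod_int of_nat_add)
  also have "\<dots> \<longleftrightarrow> int r = (int j - int (digit_sum d q)) mod int d"
    using assms by (intro residue_iff) auto
  also have "(int j - int (digit_sum d q)) mod int d = int (digit_offset j d q)"
    unfolding digit_offset_def t_d_def using assms by (simp add: zmod_int mod_diff_right_eq)
  finally show ?thesis by simp
qed

lemma offset_block:
  assumes "d \<ge> 2" "j < d" "r < d"
  shows "digit_offset j d (d * q + r) =
    (if r \<le> digit_offset j d q then digit_offset j d q - r else digit_offset j d q + d - r)"
proof -
  define c where "c = digit_offset j d q"
  have "int (digit_offset j d (d * q + r)) = (int j - (int (digit_sum d q) + int r)) mod int d"
    using assms unfolding digit_offset_def t_d_def
    by (simp add: digit_sum_block zmod_int mod_diff_right_eq)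
  also have "\<dots> = ((int j - int (digit_sum d q)) mod int d - int r) mod int d"
    by (simp add: mod_diff_left_eq diff_diff_eq)
  also have "(int j - int (digit_sum d q)) mod int d = int c"
    using assms unfolding c_def digit_offset_def t_d_def by (simp add: zmod_int mod_diff_right_eq)
  finally have offset_eq: "int (digit_offset j d (d * q + r)) = (int c - int r) mod int d" .
  have "c < d" using assms(1) unfolding c_def by (rule digit_offset_less)
  show ?thesis
  proof (cases "r \<le> c")
    case True
    then show ?thesis using offset_eq \<open>c < d\<close> unfolding c_def[symmetric] by simp
  next
    case False
    have "(int c - int r) mod int d = (int c - int r + int d) mod int d"
      by simp
    also have "\<dots> = int c - int r + int d"
      using False assms(3) by (intro mod_pos_pos_trivial) auto
    finally show ?thesis using offset_eq False unfolding c_def[symmetric] by simp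
  qed
qed

lemma enumerate_range_strict_mono:
  fixes f :: "nat \<Rightarrow> nat"
  assumes "strict_mono f"
  shows "enumerate (range f) n = f n"
proof (induction n)
  case 0
  show ?case unfolding enumerate_0
    by (rule Least_equality) (auto simp: strict_mono_less_eq[OF assms])
next
  case (Suc n)
  have "infinite (range f)"
    using strict_mono_imp_inj_on[OF assms] finite_imageD by blast
  show ?case unfolding enumerate_Suc''[OF \<open>infinite (range f)\<close>] Suc.IH
    by (intro Least_equality) (auto simp: strict_mono_less[OF assms] strict_mono_less_eq[OF assms] Suc_le_eq)
qed

lemma digit_class_range:
  assumes "d \<ge> 2" and "j < d"
  shows "range (\<lambda>k. d * k + digit_offset j d k) = {x. digit_sum d x mod d = j mod d}"
proof (intro equalityI subsetI)
  fix x assume "x \<in> range (\<lambda>k. d * k + digit_offset j d k)"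
  then obtain k where x: "x = d * k + digit_offset j d k" by blast
  have "digit_offset j d k < d" using assms(1) by (rule digit_offset_less)
  then have "digit_sum d (d * k + digit_offset j d k) mod d = j"
    using last_digit_iff_offset[OF assms] by blast
  then show "x \<in> {x. digit_sum d x mod d = j mod d}" using x assms(2) by simp
next
  fix x assume "x \<in> {x. digit_sum d x mod d = j mod d}"
  then have "digit_sum d (d * (x div d) + x mod d) mod d = j" using assms(2) by simp
  moreover have "x mod d < d" using assms(1) by simp
  ultimately have "x mod d = digit_offset j d (x div d)"
    using last_digit_iff_offset[OF assms] by blast
  then have "x = d * (x div d) + digit_offset j d (x div d)" by (metis div_mult_mod_eq mult.commute)
  then show "x \<in> range (\<lambda>k. d * k + digit_offset j d k)" by (rule range_eqI)
qed

lemma a_seq_closed_form: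
  assumes "d \<ge> 2" and "j < d"
  shows "a_seq j d k = d * k + digit_offset j d k"
proof -
  have "strict_mono (\<lambda>k. d * k + digit_offset j d k)"
    unfolding strict_mono_Suc_iff
  proof
    fix k
    have "d * k + digit_offset j d k < d * Suc k"
      using digit_offset_less[OF assms(1)] by simp
    then show "d * k + digit_offset j d k < d * Suc k + digit_offset j d (Suc k)" by simp
  qed
  then show ?thesis
    unfolding a_seq_def digit_class_range[OF assms, symmetric]
    by (rule enumerate_range_strict_mono)
qed

(* Sum of the residues (c - r) mod d for r = 0..rho, written without mod:
   every r > c wraps around and gains an extra d. *)
lemma sum_shifted_residues:
  fixes c d \<rho> :: nat
  shows "(\<Sum>r\<le>\<rho>. real c - real r + (if c < r then real d else 0)) =
    real c * (real \<rho> + 1) - real \<rho> * (real \<rho> + 1) / 2 + real d * max (real \<rho> - real c) 0"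
proof (induction \<rho>)
  case 0
  show ?case by simp
next
  case (Suc \<rho>)
  show ?case
    unfolding sum.atMost_Suc Suc.IH
    by (cases "c < Suc \<rho>") (auto simp: max_def field_simps)
qed

lemma block_offset_sum:
  assumes "d \<ge> 2" and "j < d" and "\<rho> < d"
  shows "(\<Sum>r\<le>\<rho>. real (digit_offset j d (d * q + r))) =
    real (digit_offset j d q) * (real \<rho> + 1) - real \<rho> * (real \<rho> + 1) / 2
    + real d * max (real \<rho> - real (digit_offset j d q)) 0"
proof -
  let ?c = "digit_offset j d q"
  have "real (digit_offset j d (d * q + r)) = real ?c - real r + (if ?c < r then real d else 0)"
    if "r \<le> \<rho>" for r
    using offset_block[OF assms(1,2), of r q] that assms(3) by (auto simp: of_nat_diff)
  then show ?thesis by (simp add: sum_shifted_residues)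
qed

(* Over a whole block the offsets are a permutation of 0..d-1. *)
lemma full_block_offset_sum:
  assumes "d \<ge> 2" and "j < d"
  shows "(\<Sum>r<d. real (digit_offset j d (d * q + r))) = real d * (real d - 1) / 2"
proof -
  let ?c = "real (digit_offset j d q)"
  have "{..<d} = {..d - 1}" using assms(1) by auto
  then have "(\<Sum>r<d. real (digit_offset j d (d * q + r))) =
      ?c * (real (d - 1) + 1) - real (d - 1) * (real (d - 1) + 1) / 2
      + real d * max (real (d - 1) - ?c) 0"
    using block_offset_sum[OF assms, of "d - 1" q] assms(1) by simp
  also have "\<dots> = ?c * real d - (real d - 1) * real d / 2 + real d * (real d - 1 - ?c)"
    using assms(1) digit_offset_less[OF assms(1), of j q] by (simp add: of_nat_diff)
  also have "\<dots> = real d * (real d - 1) / 2"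
    by (simp add: field_simps)
  finally show ?thesis .
qed

lemma sum_lessThan_add_split:
  fixes g :: "nat \<Rightarrow> 'a::comm_monoid_add"
  shows "(\<Sum>k<m + n. g k) = (\<Sum>k<m. g k) + (\<Sum>r<n. g (m + r))"
  by (induction n) (simp_all add: add.assoc)

lemma offset_sum_full_blocks:
  assumes "d \<ge> 2" and "j < d"
  shows "(\<Sum>k<d * m. real (digit_offset j d k)) = real m * (real d * (real d - 1) / 2)"
proof (induction m)
  case 0
  show ?case by simp
next
  case (Suc m)
  have "d * Suc m = d * m + d" by simp
  then have "(\<Sum>k<d * Suc m. real (digit_offset j d k)) =
      (\<Sum>k<d * m. real (digit_offset j d k)) + (\<Sum>r<d. real (digit_offset j d (d * m + r)))"
    by (simp only: sum_lessThan_add_split)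
  also have "\<dots> = real m * (real d * (real d - 1) / 2) + real d * (real d - 1) / 2"
    by (simp only: Suc.IH full_block_offset_sum[OF assms])
  finally show ?case by (simp add: field_simps)
qed

theorem theorem2:
  fixes d j N :: nat
  assumes "d \<ge> 2" and "j \<le> d - 1"
  defines "q \<equiv> N div d" and "\<rho> \<equiv> N mod d"
      and "c \<equiv> nat ((int j - int (t_d d (N div d))) mod int d)"
  shows "real (\<Sum>k=0..N. a_seq j d k) =
           real d * real N * (real N + 1) / 2 + real q * real d * (real d - 1) / 2
           + real c * (real \<rho> + 1) - real \<rho> * (real \<rho> + 1) / 2
           + real d * max (real \<rho> - real c) 0"
proof -
  have "j < d" and "\<rho> < d" using assms(1,2) unfolding \<rho>_def by auto
  have c: "c = digit_offset j d q" unfolding c_def q_def digit_offset_def ..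
  have N: "Suc N = d * q + Suc \<rho>" unfolding q_def \<rho>_def by simp
  have "real (\<Sum>k=0..N. a_seq j d k) = real d * (\<Sum>k\<le>N. real k) + (\<Sum>k<Suc N. real (digit_offset j d k))"
    by (simp add: a_seq_closed_form[OF assms(1) \<open>j < d\<close>] sum.distrib sum_distrib_left
        atLeast0AtMost lessThan_Suc_atMost)
  also have "(\<Sum>k\<le>N. real k) = real N * (real N + 1) / 2"
    using double_gauss_sum[of N, where ?'a = real] by (simp add: atLeast0AtMost)
  also have "(\<Sum>k<Suc N. real (digit_offset j d k)) =
      (\<Sum>k<d * q. real (digit_offset j d k)) + (\<Sum>r\<le>\<rho>. real (digit_offset j d (d * q + r)))"
    unfolding N sum_lessThan_add_split lessThan_Suc_atMost ..
  also have "\<dots> = real q * (real d * (real d - 1) / 2)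
      + (real c * (real \<rho> + 1) - real \<rho> * (real \<rho> + 1) / 2 + real d * max (real \<rho> - real c) 0)"
    unfolding c offset_sum_full_blocks[OF assms(1) \<open>j < d\<close>] block_offset_sum[OF assms(1) \<open>j < d\<close> \<open>\<rho> < d\<close>] ..
  finally show ?thesis by (simp add: algebra_simps)
qed

end
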